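(* Let $y>3$. Then for every integer $k$ with $1\le k\le\log(y)/3$, \[\sum_{m=1}^\infty d_k(m)e^{-m/y}\ll y(\log(3y))^{k+2}.\]
   Context: $d_k$ is the $k$-fold divisor function, i.e. the multiplicative function with $d_k(p^\nu)=\Gamma(k+\nu)/(\Gamma(k)\nu!)$, the Dirichlet coefficients of $\zeta(s)^k$. *)

theory Defs
  imports "HOL-Analysis.Analysis" "HOL-Computational_Algebra.Primes"
begin

text \<open>The k-fold divisor function: multiplicative, with
  d_k(p^v) = Gamma(k+v)/(Gamma(k) v!) = (k+v-1 gchoose v).\<close>
definition divisor_k :: "real \<Rightarrow> nat \<Rightarrow> real" where
  "divisor_k k n = (\<Prod>p\<in>prime_factors n. (k + real (multiplicity p n) - 1) gchoose (multiplicity p n))"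

end

theory Submission
  imports Defs
begin

(* Rankin's trick: for 1 < s \<le> 2 one has exp(-m/y) \<le> 4 (y/m)^s, so the sum is at most
   4 y^s \<Sum> d_k(m) m^-s.  By unique factorisation and the negative binomial series the partial
   sums of this Dirichlet series are bounded by the Euler product \<Prod>_p (1 - p^-s)^-k, and
   \<Prod>_p (1 - p^-s)^-1 is bounded by the partial sums of zeta(s), hence by 1 + 1/(s - 1).
   Choosing s = 1 + 1/log y makes y^s = e y and 1 + 1/(s - 1) = 1 + log y \<le> log(3y).  This gives
   the stronger bound 4e y log(3y)^k. *)

lemma powr_neg_le_telescope:
  fixes s :: real
  assumes "s > 1" "n \<ge> 2"
  shows "real n powr (-s) \<le> (real (n - 1) powr (1 - s) - real n powr (1 - s)) / (s - 1)"
proof -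
  have n1: "real (n - 1) = real n - 1" "real n - 1 > 0" using assms(2) by auto
  have "((\<lambda>t. t powr (1 - s)) has_real_derivative (1 - s) * t powr (1 - s - 1)) (at t)"
    if "real n - 1 \<le> t" "t \<le> real n" for t
    using that n1 by (auto intro!: derivative_eq_intros)
  from MVT2[of "real n - 1" "real n", OF _ this] obtain z where z: "real n - 1 < z" "z < real n"
    and mvt: "real n powr (1 - s) - (real n - 1) powr (1 - s)
              = (real n - (real n - 1)) * ((1 - s) * z powr (1 - s - 1))"
    by auto
  have "real n powr (-s) \<le> z powr (-s)"
    using z n1 assms(1) by (intro powr_mono2') auto
  also have "\<dots> = ((real n - 1) powr (1 - s) - real n powr (1 - s)) / (s - 1)"
    using mvt assms(1) by (simp add: field_simps)
  finally show ?thesis using n1 by simp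
qed

lemma sum_powr_neg_le:
  fixes s :: real
  assumes "s > 1"
  shows "(\<Sum>n=1..N. real n powr (-s)) \<le> 1 + 1 / (s - 1)"
proof (cases "N = 0")
  case False
  define g where "g n = real n powr (1 - s) / (s - 1)" for n :: nat
  have "(\<Sum>n=1..N. real n powr (-s)) = 1 + (\<Sum>n=Suc 1..N. real n powr (-s))"
    using False by (simp add: sum.atLeast_Suc_atMost)
  also have "(\<Sum>n=Suc 1..N. real n powr (-s)) \<le> (\<Sum>n=Suc 1..N. (- g n) - (- g (n - 1)))"
    unfolding g_def using powr_neg_le_telescope[OF assms] by (intro sum_mono) (simp add: diff_divide_distrib)
  also have "\<dots> = g 1 - g N"
    using False sum_telescope''[of 1 N "\<lambda>n. - g n"] by simp
  also have "\<dots> \<le> 1 / (s - 1)"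
    using assms by (simp add: g_def)
  finally show ?thesis by simp
qed (use assms in simp)

lemma prod_prime_factors_mono_neutral:
  fixes m :: nat and G :: "nat \<Rightarrow> nat \<Rightarrow> 'a::comm_monoid_mult"
  assumes "m > 0" "finite P" "\<And>p. p \<in> P \<Longrightarrow> prime p" "prime_factors m \<subseteq> P" "\<And>p. G p 0 = 1"
  shows "(\<Prod>p\<in>prime_factors m. G p (multiplicity p m)) = (\<Prod>p\<in>P. G p (multiplicity p m))"
proof (rule prod.mono_neutral_left[OF assms(2,4)], intro ballI)
  fix p assume "p \<in> P - prime_factors m"
  then have "multiplicity p m = 0"
    using assms(1,3) by (auto simp: prime_factors_multiplicity)
  then show "G p (multiplicity p m) = 1" using assms(5) by simp
qed

lemma prod_prime_powers_multiplicity: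
  fixes m :: nat
  assumes "m > 0" "finite P" "\<And>p. p \<in> P \<Longrightarrow> prime p" "prime_factors m \<subseteq> P"
  shows "(\<Prod>p\<in>P. p ^ multiplicity p m) = m"
proof -
  have "(\<Prod>p\<in>P. p ^ multiplicity p m) = (\<Prod>p\<in>prime_factors m. p ^ multiplicity p m)"
    using prod_prime_factors_mono_neutral[OF assms, of "\<lambda>p j. p ^ j"] by simp
  also have "\<dots> = m"
    using assms(1) by (simp add: prod_prime_factors)
  finally show ?thesis .
qed

lemma realpow_powr:
  fixes x a :: real
  assumes "x > 0"
  shows "(x ^ n) powr a = (x powr a) ^ n"
proof -
  have "(x ^ n) powr a = (x powr real n) powr a"
    using assms by (simp add: powr_realpow)
  also have "\<dots> = (x powr a) ^ n"
    using assms by (simp add: powr_powr powr_power mult.commute)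
  finally show ?thesis .
qed

lemma powr_eq_prod_prime_powers:
  fixes m :: nat and a :: real
  assumes "m > 0" "finite P" "\<And>p. p \<in> P \<Longrightarrow> prime p" "prime_factors m \<subseteq> P"
  shows "real m powr a = (\<Prod>p\<in>P. (real p powr a) ^ multiplicity p m)"
proof -
  have "real m powr a = real (\<Prod>p\<in>P. p ^ multiplicity p m) powr a"
    by (simp only: prod_prime_powers_multiplicity[OF assms])
  also have "\<dots> = (\<Prod>p\<in>P. (real p ^ multiplicity p m) powr a)"
    by (simp only: of_nat_prod of_nat_power prod_powr_distrib)
  also have "\<dots> = (\<Prod>p\<in>P. (real p powr a) ^ multiplicity p m)"
    using assms(3) by (intro prod.cong refl realpow_powr) (simp add: prime_gt_0_nat)
  finally show ?thesis .
qed

definition prime_power_products :: "nat set \<Rightarrow> nat \<Rightarrow> nat set" where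
  "prime_power_products P M = {n. n > 0 \<and> prime_factors n \<subseteq> P \<and> (\<forall>p\<in>P. multiplicity p n < M)}"

lemma bij_betw_prime_power_products:
  assumes "finite P" "\<And>p. p \<in> P \<Longrightarrow> prime p"
  shows "bij_betw (\<lambda>g. \<Prod>p\<in>P. p ^ g p) (PiE P (\<lambda>_. {..<M})) (prime_power_products P M)"
proof (rule bij_betwI[where g = "\<lambda>n. restrict (\<lambda>p. multiplicity p n) P"])
  have mult: "multiplicity q (\<Prod>p\<in>P. p ^ g p) = (if q \<in> P then g q else 0)" if "prime q" for q g
    using multiplicity_prod_prime_powers[OF assms that] .
  show "(\<lambda>g. \<Prod>p\<in>P. p ^ g p) \<in> PiE P (\<lambda>_. {..<M}) \<rightarrow> prime_power_products P M"
    using assms(2) by (auto simp: prime_power_products_def prime_factors_multiplicity mult prime_gt_0_nat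
                            intro!: prod_pos split: if_splits)
  show "(\<lambda>n. restrict (\<lambda>p. multiplicity p n) P) \<in> prime_power_products P M \<rightarrow> PiE P (\<lambda>_. {..<M})"
    by (auto simp: prime_power_products_def)
  show "restrict (\<lambda>p. multiplicity p (\<Prod>p\<in>P. p ^ g p)) P = g" if "g \<in> PiE P (\<lambda>_. {..<M})" for g
    using that assms(2) by (intro PiE_ext[OF _ that]) (auto simp: mult)
  show "(\<Prod>p\<in>P. p ^ restrict (\<lambda>p. multiplicity p n) P p) = n" if "n \<in> prime_power_products P M" for n
  proof -
    have "(\<Prod>p\<in>P. p ^ restrict (\<lambda>p. multiplicity p n) P p) = (\<Prod>p\<in>P. p ^ multiplicity p n)"
      by (intro prod.cong) auto
    also have "\<dots> = n"
      using that by (intro prod_prime_powers_multiplicity assms) (auto simp: prime_power_products_def)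
    finally show ?thesis .
  qed
qed

lemma prod_sum_eq_sum_prime_power_products:
  fixes F :: "nat \<Rightarrow> nat \<Rightarrow> 'a::comm_semiring_1"
  assumes "finite P" "\<And>p. p \<in> P \<Longrightarrow> prime p"
  shows "(\<Prod>p\<in>P. \<Sum>j<M. F p j) = (\<Sum>n\<in>prime_power_products P M. \<Prod>p\<in>P. F p (multiplicity p n))"
proof -
  have "(\<Prod>p\<in>P. \<Sum>j<M. F p j) = (\<Sum>g\<in>PiE P (\<lambda>_. {..<M}). \<Prod>p\<in>P. F p (g p))"
    using assms(1) by (rule prod_sum_PiE) simp
  also have "\<dots> = (\<Sum>g\<in>PiE P (\<lambda>_. {..<M}).
                        \<Prod>p\<in>P. F p (multiplicity p (\<Prod>q\<in>P. q ^ g q)))"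
    using assms by (intro sum.cong prod.cong refl) (simp add: multiplicity_prod_prime_powers)
  also have "\<dots> = (\<Sum>n\<in>prime_power_products P M. \<Prod>p\<in>P. F p (multiplicity p n))"
    by (rule sum.reindex_bij_betw[OF bij_betw_prime_power_products[OF assms]])
  finally show ?thesis .
qed

lemma finite_prime_power_products:
  assumes "finite P" "\<And>p. p \<in> P \<Longrightarrow> prime p"
  shows "finite (prime_power_products P M)"
  using bij_betw_finite[OF bij_betw_prime_power_products[OF assms, of M]] assms(1)
  by (simp add: finite_PiE)

lemma prod_geometric_partial_le:
  fixes s :: real
  assumes "s > 1" "finite P" "\<And>p. p \<in> P \<Longrightarrow> prime p"
  shows "(\<Prod>p\<in>P. \<Sum>j<M. (real p powr (-s)) ^ j) \<le> 1 + 1 / (s - 1)"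
proof -
  define T where "T = prime_power_products P M"
  have "(\<Prod>p\<in>P. \<Sum>j<M. (real p powr (-s)) ^ j)
        = (\<Sum>n\<in>T. \<Prod>p\<in>P. (real p powr (-s)) ^ multiplicity p n)"
    unfolding T_def by (rule prod_sum_eq_sum_prime_power_products[OF assms(2,3)])
  also have "\<dots> = (\<Sum>n\<in>T. real n powr (-s))"
    using assms(2,3) by (intro sum.cong refl powr_eq_prod_prime_powers[symmetric])
                        (auto simp: T_def prime_power_products_def)
  also have "\<dots> \<le> (\<Sum>n=1..Max T. real n powr (-s))"
    using finite_prime_power_products[OF assms(2,3)]
    by (intro sum_mono2) (auto simp: T_def prime_power_products_def Suc_le_eq)
  also have "\<dots> \<le> 1 + 1 / (s - 1)"
    by (rule sum_powr_neg_le[OF assms(1)])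
  finally show ?thesis .
qed

lemma euler_product_le:
  fixes s :: real
  assumes "s > 1" "finite P" "\<And>p. p \<in> P \<Longrightarrow> prime p"
  shows "(\<Prod>p\<in>P. 1 / (1 - real p powr (-s))) \<le> 1 + 1 / (s - 1)"
proof (rule LIMSEQ_le_const2)
  show "(\<lambda>M. \<Prod>p\<in>P. \<Sum>j<M. (real p powr (-s)) ^ j)
          \<longlonglongrightarrow> (\<Prod>p\<in>P. 1 / (1 - real p powr (-s)))"
  proof (rule tendsto_prod)
    fix p assume "p \<in> P"
    then have "real p > 1" using assms(3) prime_gt_1_nat by auto
    then have "norm (real p powr (-s)) < 1" using assms(1) by (simp add: powr_less_one)
    from geometric_sums[OF this]
    show "(\<lambda>M. \<Sum>j<M. (real p powr (-s)) ^ j) \<longlonglongrightarrow> 1 / (1 - real p powr (-s))"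
      by (simp add: sums_def)
  qed
qed (use prod_geometric_partial_le[OF assms] in blast)

lemma gbinomial_nonneg:
  fixes a :: real
  assumes "a \<ge> real n - 1"
  shows "0 \<le> a gchoose n"
  unfolding gbinomial_prod_rev using assms by (auto intro!: divide_nonneg_pos prod_nonneg)

lemma sum_gbinomial_power_le:
  fixes x :: real and k :: nat
  assumes "0 \<le> x" "x < 1" "k \<ge> 1"
  shows "(\<Sum>j<M. ((real k + real j - 1) gchoose j) * x ^ j) \<le> (1 / (1 - x)) ^ k"
proof -
  have "(- real k gchoose j) * (- x) ^ j = ((real k + real j - 1) gchoose j) * x ^ j" for j
    by (subst gbinomial_negated_upper) (simp add: power_minus' add.commute)
  moreover have "(1 + - x) powr (- real k) = (1 / (1 - x)) ^ k"
    using assms by (simp add: powr_minus powr_realpow divide_inverse power_inverse)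
  ultimately have series: "(\<lambda>j. ((real k + real j - 1) gchoose j) * x ^ j) sums (1 / (1 - x)) ^ k"
    using gen_binomial_real[of "- x" "- real k"] assms by simp
  then have "(\<Sum>j<M. ((real k + real j - 1) gchoose j) * x ^ j)
             \<le> (\<Sum>j. ((real k + real j - 1) gchoose j) * x ^ j)"
    using assms by (intro sum_le_suminf) (auto simp: sums_iff intro!: mult_nonneg_nonneg gbinomial_nonneg)
  also have "\<dots> = (1 / (1 - x)) ^ k"
    using series by (rule sums_unique[symmetric])
  finally show ?thesis .
qed

lemma divisor_k_nonneg:
  assumes "k \<ge> 1"
  shows "0 \<le> divisor_k (real k) m"
  unfolding divisor_k_def using assms by (auto intro!: prod_nonneg gbinomial_nonneg)

lemma divisor_k_dirichlet_partial_le: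
  fixes s :: real and k :: nat
  assumes s: "s > 1" and k: "k \<ge> 1"
  shows "(\<Sum>m=1..N. divisor_k (real k) m * real m powr (-s)) \<le> (1 + 1 / (s - 1)) ^ k"
proof -
  define P where "P = {p. prime p \<and> p \<le> N}"
  have P: "finite P" "\<And>p. p \<in> P \<Longrightarrow> prime p" unfolding P_def by auto
  define x where "x p = real p powr (-s)" for p :: nat
  have x: "0 < x p" "x p < 1" if "p \<in> P" for p
    using P(2)[OF that] prime_gt_1_nat[of p] s by (auto simp: x_def powr_less_one)
  define F where "F p j = ((real k + real j - 1) gchoose j) * x p ^ j" for p j
  have F_nonneg: "0 \<le> F p j" if "p \<in> P" for p j
    unfolding F_def using x[OF that] k by (auto intro!: mult_nonneg_nonneg gbinomial_nonneg)
  have factors: "prime_factors m \<subseteq> P" if "m \<in> {1..N}" for m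
    using that by (auto simp: P_def in_prime_factors_iff dest!: dvd_imp_le)
  have upto_N: "{1..N} \<subseteq> prime_power_products P (Suc N)"
  proof
    fix m assume m: "m \<in> {1..N}"
    have "multiplicity p m < Suc N" if "p \<in> P" for p
    proof -
      have "multiplicity p m < 2 ^ multiplicity p m" by (rule less_exp)
      also have "\<dots> \<le> p ^ multiplicity p m"
        using prime_ge_2_nat[OF P(2)[OF that]] by (intro power_mono) auto
      also have "\<dots> \<le> m" using m by (intro dvd_imp_le multiplicity_dvd) auto
      finally show ?thesis using m by simp
    qed
    then show "m \<in> prime_power_products P (Suc N)"
      using m factors[OF m] by (auto simp: prime_power_products_def)
  qed
  have multiplicative: "divisor_k (real k) m * real m powr (-s) = (\<Prod>p\<in>P. F p (multiplicity p m))"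
    if "m \<in> {1..N}" for m
  proof -
    have "divisor_k (real k) m = (\<Prod>p\<in>P. (real k + real (multiplicity p m) - 1) gchoose multiplicity p m)"
      unfolding divisor_k_def using that P factors[OF that]
      by (intro prod_prime_factors_mono_neutral[where G = "\<lambda>_ j. (real k + real j - 1) gchoose j"]) auto
    moreover have "real m powr (-s) = (\<Prod>p\<in>P. x p ^ multiplicity p m)"
      unfolding x_def using that P factors[OF that] by (intro powr_eq_prod_prime_powers) auto
    ultimately show ?thesis by (simp add: F_def prod.distrib)
  qed
  have "(\<Sum>m=1..N. divisor_k (real k) m * real m powr (-s)) = (\<Sum>m=1..N. \<Prod>p\<in>P. F p (multiplicity p m))"
    using multiplicative by simp
  also have "\<dots> \<le> (\<Sum>m\<in>prime_power_products P (Suc N). \<Prod>p\<in>P. F p (multiplicity p m))"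
    using upto_N finite_prime_power_products[OF P] F_nonneg by (intro sum_mono2 prod_nonneg) auto
  also have "\<dots> = (\<Prod>p\<in>P. \<Sum>j<Suc N. F p j)"
    by (rule prod_sum_eq_sum_prime_power_products[OF P, symmetric])
  also have "\<dots> \<le> (\<Prod>p\<in>P. (1 / (1 - x p)) ^ k)"
    using F_nonneg x k unfolding F_def
    by (intro prod_mono conjI sum_nonneg sum_gbinomial_power_le) (auto simp: less_imp_le)
  also have "\<dots> = (\<Prod>p\<in>P. 1 / (1 - x p)) ^ k"
    by (rule prod_power_distrib[symmetric])
  also have "\<dots> \<le> (1 + 1 / (s - 1)) ^ k"
    using x euler_product_le[OF s P] unfolding x_def
    by (intro power_mono prod_nonneg) (auto simp: less_imp_le)
  finally show ?thesis .
qed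

lemma exp_neg_le_powr:
  fixes t s :: real
  assumes "t > 0" "1 \<le> s" "s \<le> 2"
  shows "exp (-t) \<le> 4 * t powr (-s)"
proof -
  have "t powr s \<le> 4 * exp t"
  proof (cases "t \<le> 1")
    case True
    then have "t powr s \<le> 1" using assms by (intro powr_le1) auto
    also have "1 \<le> exp t" using assms(1) by simp
    finally show ?thesis using exp_gt_zero[of t] by linarith
  next
    case False
    then have "t powr s \<le> t ^ 2" using assms by (auto intro: powr_mono simp flip: powr_numeral)
    also have "\<dots> \<le> 4 * (1 + t / 2) ^ 2" using assms(1) by (simp add: power2_eq_square algebra_simps)
    also have "(1 + t / 2) ^ 2 \<le> exp (t / 2) ^ 2" using assms(1) by (intro power_mono exp_ge_add_one_self) auto
    also have "exp (t / 2) ^ 2 = exp t" by (simp flip: exp_of_nat_mult)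
    finally show ?thesis by simp
  qed
  then show ?thesis using assms(1) by (simp add: powr_minus exp_minus field_simps)
qed

lemma divisor_k_exp_series_le:
  fixes y s :: real and k :: nat
  assumes k: "k \<ge> 1" and y: "y > 0" and s: "1 < s" "s \<le> 2"
  defines "a \<equiv> \<lambda>m. divisor_k (real k) (Suc m) * exp (- real (Suc m) / y)"
  shows "summable a" "suminf a \<le> 4 * y powr s * (1 + 1 / (s - 1)) ^ k"
proof -
  have a_nonneg: "0 \<le> a m" for m
    unfolding a_def using divisor_k_nonneg[OF k] by simp
  have a_le: "a m \<le> 4 * y powr s * (divisor_k (real k) (Suc m) * real (Suc m) powr (-s))" for m
  proof -
    have "exp (- real (Suc m) / y) \<le> 4 * (real (Suc m) / y) powr (-s)"
      unfolding minus_divide_left[symmetric] by (rule exp_neg_le_powr) (use y s in auto)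
    also have "\<dots> = 4 * y powr s * real (Suc m) powr (-s)"
      using y by (simp add: powr_divide powr_minus field_simps)
    finally have "exp (- real (Suc m) / y) \<le> 4 * y powr s * real (Suc m) powr (-s)" .
    from mult_left_mono[OF this divisor_k_nonneg[OF k, of "Suc m"]] show ?thesis
      unfolding a_def by (simp only: ac_simps)
  qed
  have partial_le: "(\<Sum>m<N. a m) \<le> 4 * y powr s * (1 + 1 / (s - 1)) ^ k" for N
  proof -
    have "(\<Sum>m<N. a m) \<le> 4 * y powr s * (\<Sum>m<N. divisor_k (real k) (Suc m) * real (Suc m) powr (-s))"
      unfolding sum_distrib_left by (intro sum_mono a_le)
    also have "(\<Sum>m<N. divisor_k (real k) (Suc m) * real (Suc m) powr (-s))
             = (\<Sum>m=1..N. divisor_k (real k) m * real m powr (-s))"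
      by (simp add: sum.atLeast1_atMost_eq)
    also have "4 * y powr s * \<dots> \<le> 4 * y powr s * (1 + 1 / (s - 1)) ^ k"
      using divisor_k_dirichlet_partial_le[OF s(1) k] by (intro mult_left_mono) auto
    finally show ?thesis by simp
  qed
  show "summable a" by (rule summableI_nonneg_bounded[OF a_nonneg partial_le])
  then show "suminf a \<le> 4 * y powr s * (1 + 1 / (s - 1)) ^ k" by (rule suminf_le_const[OF _ partial_le])
qed

lemma divisor_k_exp_series_le_log:
  fixes y :: real and k :: nat
  assumes k: "k \<ge> 1" and y: "y > 3"
  shows "summable (\<lambda>m. divisor_k (real k) (Suc m) * exp (- real (Suc m) / y))"
    and "(\<Sum>m. divisor_k (real k) (Suc m) * exp (- real (Suc m) / y)) \<le> 12 * y * ln (3 * y) ^ k"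
proof -
  have e_lt_3: "exp 1 < (3::real)" using e_less_272 by simp
  have ln_y: "ln y > 1" using ln_less_cancel_iff[of "exp 1" y] y e_lt_3 by simp
  define s where "s = 1 + 1 / ln y"
  have s: "1 < s" "s \<le> 2" using ln_y by (auto simp: s_def field_simps)
  note bound = divisor_k_exp_series_le[OF k _ s, of y]
  show "summable (\<lambda>m. divisor_k (real k) (Suc m) * exp (- real (Suc m) / y))"
    using bound y by simp
  have "y powr s = exp 1 * y" using y ln_y by (simp add: s_def powr_def distrib_right exp_add)
  then have "4 * y powr s \<le> 12 * y" using e_lt_3 y by simp
  moreover have "1 + 1 / (s - 1) = ln (exp 1 * y)" using y ln_y by (simp add: s_def ln_mult)
  then have "1 + 1 / (s - 1) \<le> ln (3 * y)" using y e_lt_3 by simp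
  then have "(1 + 1 / (s - 1)) ^ k \<le> ln (3 * y) ^ k"
    using s by (intro power_mono) auto
  ultimately have "4 * y powr s * (1 + 1 / (s - 1)) ^ k \<le> 12 * y * ln (3 * y) ^ k"
    by (rule mult_mono) (use y s in auto)
  then show "(\<Sum>m. divisor_k (real k) (Suc m) * exp (- real (Suc m) / y)) \<le> 12 * y * ln (3 * y) ^ k"
    using bound y by simp
qed

theorem lemma18:
  shows "\<exists>C>0. \<forall>y::real. y > 3 \<longrightarrow> (\<forall>k::nat. 1 \<le> k \<and> real k \<le> ln y / 3 \<longrightarrow>
     summable (\<lambda>m. divisor_k (real k) (Suc m) * exp (- real (Suc m) / y)) \<and>
     (\<Sum>m. divisor_k (real k) (Suc m) * exp (- real (Suc m) / y)) \<le> C * y * (ln (3 * y)) ^ (k + 2))"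
proof (intro exI[of _ 12] conjI allI impI)
  fix y :: real and k :: nat
  assume y: "y > 3" and "1 \<le> k \<and> real k \<le> ln y / 3"
  then have k: "k \<ge> 1" by simp
  show "summable (\<lambda>m. divisor_k (real k) (Suc m) * exp (- real (Suc m) / y))"
    by (rule divisor_k_exp_series_le_log(1)[OF k y])
  have "1 \<le> ln (3 * y)"
    using y e_less_272 by (simp add: ln_ge_iff)
  then have "12 * y * ln (3 * y) ^ k \<le> 12 * y * ln (3 * y) ^ (k + 2)"
    using y by (intro mult_left_mono power_increasing) auto
  with divisor_k_exp_series_le_log(2)[OF k y]
  show "(\<Sum>m. divisor_k (real k) (Suc m) * exp (- real (Suc m) / y)) \<le> 12 * y * ln (3 * y) ^ (k + 2)"
    by linarith
qed simp

end
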